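(* Let $M$ be a compact, connected, smooth Riemannian manifold without boundary, and let $X_1, X_2, \dots$ be $M$-valued random variables, each with the same distribution $\mu \in \mathcal{P}(M)$. Let $\mu_N = N^{-1}\sum_{n=1}^N \delta_{X_n}$. If $N^{-2}\sum_{1 \le m<n \le N} \alpha(X_m,X_n) \to 0$ as $N \to \infty$, then $\mathbb{E}\, W_2^2(\mu_N,\mu) \to 0$ as $N \to \infty$.
   Context: $\mathcal{P}(M)$ denotes the set of Borel probability measures on $M$, and $\rho$ the geodesic distance on $M$. The quadratic Wasserstein metric is $W_2(\mu,\nu)=\inf_{\pi}\left(\int_{M\times M}\rho(x,y)^2\,\mathrm{d}\pi(x,y)\right)^{1/2}$, the infimum over all couplings $\pi\in\mathcal{P}(M\times M)$ of $\mu$ and $\nu$ (i.e. with marginals $\mu$ and $\nu$). The $\alpha$-mixing coefficient of two $M$-valued random variables $X,Y$ is $\alpha(X,Y)=\sup_{A,B}|\Pr(X\in A, Y\in B)-\Pr(X\in A)\Pr(Y\in B)|$, the supremum over Borel sets $A,B\subseteq M$. *)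

theory Defs
  imports "HOL-Probability.Probability"
begin

definition couplings :: "'a measure \<Rightarrow> 'a measure \<Rightarrow> ('a \<times> 'a) measure set" where
  "couplings \<mu> \<nu> = {\<pi>. sets \<pi> = sets (\<mu> \<Otimes>\<^sub>M \<nu>) \<and>
      distr \<pi> \<mu> fst = \<mu> \<and> distr \<pi> \<nu> snd = \<nu>}"

definition W2 :: "('a::metric_space) measure \<Rightarrow> 'a measure \<Rightarrow> real" where
  "W2 \<mu> \<nu> = sqrt (enn2real (INF \<pi>\<in>couplings \<mu> \<nu>.
       \<integral>\<^sup>+ z. ennreal ((dist (fst z) (snd z))\<^sup>2) \<partial>\<pi>))"

definition empirical :: "nat \<Rightarrow> (nat \<Rightarrow> 'a::topological_space) \<Rightarrow> 'a measure" where
  "empirical N x = distr (uniform_count_measure {1..N}) borel x"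

definition alpha_mix :: "'s measure \<Rightarrow> ('s \<Rightarrow> 'a::topological_space) \<Rightarrow> ('s \<Rightarrow> 'a) \<Rightarrow> real" where
  "alpha_mix P X Y = (SUP AB\<in>sets borel \<times> sets borel.
      \<bar>measure P ({\<omega>\<in>space P. X \<omega> \<in> fst AB \<and> Y \<omega> \<in> snd AB})
       - measure P ({\<omega>\<in>space P. X \<omega> \<in> fst AB}) * measure P ({\<omega>\<in>space P. Y \<omega> \<in> snd AB})\<bar>)"

end

theory Submission
  imports Defs
begin

(* Partition M into finitely many Borel cells C_1, ..., C_K of diameter at most eps.
   Coupling two measures maximally on the cells, i.e. keeping the common mass of each
   cell inside that cell, gives
     W2(nu, mu)^2 <= eps^2 + D^2 * sum_i |nu(C_i) - mu(C_i)|,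
   where D bounds the diameter of M.  With |z| <= z^2/delta + delta, the expectation
   for nu = mu_N is controlled by the second moments of the centred counts
   sum_n (1_{C_i}(X_n) - mu(C_i)); each is at most N + 2 sum_{m<n} alpha(X_m, X_n),
   because the covariance of two indicators is bounded by the alpha-mixing coefficient.
   So E W2(mu_N, mu)^2 <= eps^2 + D^2 K (delta + V_N / delta) with V_N -> 0; choosing
   eps, then delta, makes the right-hand side eventually small. *)

lemma maximal_coupling_finite:
  fixes a b :: "nat \<Rightarrow> real"
  assumes a0: "\<forall>i<K. a i \<ge> 0" and b0: "\<forall>i<K. b i \<ge> 0"
    and sa: "(\<Sum>i<K. a i) = 1" and sb: "(\<Sum>i<K. b i) = 1"
  obtains p where "\<forall>i<K. \<forall>j<K. p i j \<ge> 0"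
    and "\<forall>i<K. (\<Sum>j<K. p i j) = a i"
    and "\<forall>j<K. (\<Sum>i<K. p i j) = b j"
    and "\<forall>i<K. \<forall>j<K. a i = 0 \<or> b j = 0 \<longrightarrow> p i j = 0"
    and "(\<Sum>i<K. \<Sum>j\<in>{..<K}-{i}. p i j) \<le> (\<Sum>i<K. \<bar>a i - b i\<bar>)"
proof -
  define m where "m i = min (a i) (b i)" for i
  define r where "r = 1 - (\<Sum>i<K. m i)"
  \<comment> \<open>Put the common mass \<open>min (a i) (b i)\<close> on the diagonal and couple the excesses independently.\<close>
  define p where "p i j = (if i = j then m i else 0) + (a i - m i) * (b j - m j) / r" for i j
  have ra: "r = (\<Sum>i<K. a i - m i)" unfolding r_def using sa by (simp add: sum_subtractf)
  have rb: "r = (\<Sum>i<K. b i - m i)" unfolding r_def using sb by (simp add: sum_subtractf)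
  have am: "\<forall>i<K. a i - m i \<ge> 0" "\<forall>i<K. b i - m i \<ge> 0" by (auto simp: m_def)
  have r0: "r \<ge> 0" unfolding ra using am by (auto intro: sum_nonneg)
  have excess_orth: "(a i - m i) * (b i - m i) = 0" for i by (auto simp: m_def min_def)
  have rowsum: "(\<Sum>j<K. p i j) = a i" if "i < K" for i
  proof -
    have "(\<Sum>j<K. p i j) = m i + (a i - m i) / r * (\<Sum>j<K. b j - m j)"
      unfolding p_def using that by (simp add: sum.distrib sum_distrib_left)
    also have "\<dots> = a i"
    proof (cases "r = 0")
      case True
      then have "\<forall>j\<in>{..<K}. a j - m j = 0"
        using sum_nonneg_eq_0_iff[of "{..<K}" "\<lambda>j. a j - m j"] am ra by auto
      then show ?thesis using that True by auto
    qed (use rb in simp)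
    finally show ?thesis .
  qed
  have colsum: "(\<Sum>i<K. p i j) = b j" if "j < K" for j
  proof -
    have "(\<Sum>i<K. p i j) = m j + (\<Sum>i<K. a i - m i) * (b j - m j) / r"
      unfolding p_def using that by (simp add: sum.distrib sum_distrib_right sum_divide_distrib)
    also have "\<dots> = b j"
    proof (cases "r = 0")
      case True
      then have "\<forall>i\<in>{..<K}. b i - m i = 0"
        using sum_nonneg_eq_0_iff[of "{..<K}" "\<lambda>i. b i - m i"] am rb by auto
      then show ?thesis using that True by auto
    qed (use ra in simp)
    finally show ?thesis .
  qed
  have "(\<Sum>i<K. \<Sum>j\<in>{..<K}-{i}. p i j) = (\<Sum>i<K. a i - m i)"
  proof (rule sum.cong)
    fix i assume i: "i \<in> {..<K}"
    have "(\<Sum>j<K. p i j) = p i i + (\<Sum>j\<in>{..<K}-{i}. p i j)"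
      using i by (simp add: sum.remove)
    then show "(\<Sum>j\<in>{..<K}-{i}. p i j) = a i - m i"
      using rowsum[of i] i excess_orth[of i] by (simp add: p_def)
  qed simp
  also have "\<dots> \<le> (\<Sum>i<K. \<bar>a i - b i\<bar>)"
    by (rule sum_mono) (auto simp: m_def min_def)
  finally show ?thesis
    using that[of p] rowsum colsum am r0 a0 b0 by (auto simp: p_def m_def)
qed

lemma (in finite_measure) measure_eq_sum_partition:
  fixes C :: "nat \<Rightarrow> 'a set"
  assumes "\<forall>i<K. C i \<in> sets M" and "disjoint_family_on C {..<K}"
    and "A \<in> sets M" and "A \<subseteq> (\<Union>i<K. C i)"
  shows "measure M A = (\<Sum>i<K. measure M (C i \<inter> A))"
proof -
  have "A = (\<Union>i<K. C i \<inter> A)" using assms(4) by auto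
  then have "measure M A = measure M (\<Union>i<K. C i \<inter> A)" by simp
  also have "\<dots> = (\<Sum>i<K. measure M (C i \<inter> A))"
    by (rule finite_measure_finite_Union) (use assms in \<open>auto simp: disjoint_family_on_def\<close>)
  finally show ?thesis .
qed

lemma distr_fst_eqI:
  assumes "sets \<pi> = sets (M1 \<Otimes>\<^sub>M M2)"
    and "\<And>A. A \<in> sets M1 \<Longrightarrow> emeasure \<pi> (A \<times> space M2) = emeasure M1 A"
  shows "distr \<pi> M1 fst = M1"
proof (rule measure_eqI)
  have fst: "fst \<in> measurable \<pi> M1" using measurable_cong_sets[OF assms(1) refl] measurable_fst by blast
  have sp: "space \<pi> = space M1 \<times> space M2"
    using sets_eq_imp_space_eq[OF assms(1)] by (simp add: space_pair_measure)
  fix A assume "A \<in> sets (distr \<pi> M1 fst)"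
  then have A: "A \<in> sets M1" by simp
  have "fst -` A \<inter> space \<pi> = A \<times> space M2"
    using sp sets.sets_into_space[OF A] by auto
  then show "emeasure (distr \<pi> M1 fst) A = emeasure M1 A"
    using emeasure_distr[OF fst] A assms(2) by simp
qed simp

lemma distr_snd_eqI:
  assumes "sets \<pi> = sets (M1 \<Otimes>\<^sub>M M2)"
    and "\<And>B. B \<in> sets M2 \<Longrightarrow> emeasure \<pi> (space M1 \<times> B) = emeasure M2 B"
  shows "distr \<pi> M2 snd = M2"
proof (rule measure_eqI)
  have snd: "snd \<in> measurable \<pi> M2" using measurable_cong_sets[OF assms(1) refl] measurable_snd by blast
  have sp: "space \<pi> = space M1 \<times> space M2"
    using sets_eq_imp_space_eq[OF assms(1)] by (simp add: space_pair_measure)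
  fix B assume "B \<in> sets (distr \<pi> M2 snd)"
  then have B: "B \<in> sets M2" by simp
  have "snd -` B \<inter> space \<pi> = space M1 \<times> B"
    using sp sets.sets_into_space[OF B] by auto
  then show "emeasure (distr \<pi> M2 snd) B = emeasure M2 B"
    using emeasure_distr[OF snd] B assms(2) by simp
qed simp

lemma emeasure_cell_density_Times:
  fixes M1 M2 :: "'a::topological_space measure" and C :: "nat \<Rightarrow> 'a set" and G :: "nat \<Rightarrow> nat \<Rightarrow> real"
  assumes "prob_space M1" and "prob_space M2"
    and S1: "sets M1 = sets borel" and S2: "sets M2 = sets borel"
    and C: "\<forall>i<K. C i \<in> sets borel" and G: "\<forall>i j. G i j \<ge> 0"
    and A: "A \<in> sets borel" and B: "B \<in> sets borel"
  shows "emeasure (density (M1 \<Otimes>\<^sub>M M2) (\<lambda>z. \<Sum>i<K. \<Sum>j<K. ennreal (G i j) * indicator (C i \<times> C j) z)) (A \<times> B)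
    = ennreal (\<Sum>i<K. \<Sum>j<K. G i j * measure M1 (C i \<inter> A) * measure M2 (C j \<inter> B))"
proof -
  interpret p1: prob_space M1 by fact
  interpret p2: prob_space M2 by fact
  interpret pp: pair_sigma_finite M1 M2 by unfold_locales
  have rect: "S \<times> T \<in> sets (M1 \<Otimes>\<^sub>M M2)" if "S \<in> sets borel" "T \<in> sets borel" for S T
    using that S1 S2 by (auto intro!: pair_measureI)
  have CA: "C i \<inter> A \<in> sets borel" "C i \<inter> B \<in> sets borel" if "i < K" for i
    using C A B that by auto
  have "emeasure (density (M1 \<Otimes>\<^sub>M M2) (\<lambda>z. \<Sum>i<K. \<Sum>j<K. ennreal (G i j) * indicator (C i \<times> C j) z)) (A \<times> B)
      = (\<integral>\<^sup>+ z. (\<Sum>i<K. \<Sum>j<K. ennreal (G i j) * indicator (C i \<times> C j) z) * indicator (A \<times> B) z \<partial>(M1 \<Otimes>\<^sub>M M2))"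
  proof (rule emeasure_density)
    show "(\<lambda>z. \<Sum>i<K. \<Sum>j<K. ennreal (G i j) * indicator (C i \<times> C j) z) \<in> borel_measurable (M1 \<Otimes>\<^sub>M M2)"
      using C by (intro borel_measurable_sum borel_measurable_times_ennreal borel_measurable_const
          borel_measurable_indicator) (auto intro: rect)
  qed (use A B rect in auto)
  also have "\<dots> = (\<integral>\<^sup>+ z. (\<Sum>i<K. \<Sum>j<K. ennreal (G i j) * indicator ((C i \<inter> A) \<times> (C j \<inter> B)) z) \<partial>(M1 \<Otimes>\<^sub>M M2))"
    unfolding sum_distrib_right
    by (intro nn_integral_cong sum.cong refl) (auto simp: mult.assoc split: split_indicator)
  also have "\<dots> = (\<Sum>i<K. \<Sum>j<K. ennreal (G i j) * emeasure (M1 \<Otimes>\<^sub>M M2) ((C i \<inter> A) \<times> (C j \<inter> B)))"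
  proof -
    have CAB: "(C i \<inter> A) \<times> (C j \<inter> B) \<in> sets (M1 \<Otimes>\<^sub>M M2)" if "i < K" "j < K" for i j
      using CA that by (auto intro: rect)
    have "(\<integral>\<^sup>+ z. (\<Sum>i<K. \<Sum>j<K. ennreal (G i j) * indicator ((C i \<inter> A) \<times> (C j \<inter> B)) z) \<partial>(M1 \<Otimes>\<^sub>M M2))
      = (\<Sum>i<K. \<Sum>j<K. \<integral>\<^sup>+ z. ennreal (G i j) * indicator ((C i \<inter> A) \<times> (C j \<inter> B)) z \<partial>(M1 \<Otimes>\<^sub>M M2))"
      by (subst nn_integral_sum; (intro sum.cong refl nn_integral_sum)?;
          intro borel_measurable_sum borel_measurable_times_ennreal borel_measurable_const
            borel_measurable_indicator CAB; simp)
    also have "\<dots> = (\<Sum>i<K. \<Sum>j<K. ennreal (G i j) * emeasure (M1 \<Otimes>\<^sub>M M2) ((C i \<inter> A) \<times> (C j \<inter> B)))"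
      using CAB by (intro sum.cong refl nn_integral_cmult_indicator) auto
    finally show ?thesis .
  qed
  also have "\<dots> = (\<Sum>i<K. \<Sum>j<K. ennreal (G i j * measure M1 (C i \<inter> A) * measure M2 (C j \<inter> B)))"
    using CA S1 S2 G
    by (intro sum.cong refl)
       (simp add: p2.emeasure_pair_measure_Times p1.emeasure_eq_measure p2.emeasure_eq_measure ennreal_mult mult.assoc)
  also have "\<dots> = ennreal (\<Sum>i<K. \<Sum>j<K. G i j * measure M1 (C i \<inter> A) * measure M2 (C j \<inter> B))"
    using G by (simp add: sum_nonneg)
  finally show ?thesis .
qed

lemma normalized_row_sum:
  fixes p :: "nat \<Rightarrow> nat \<Rightarrow> real"
  assumes "(\<Sum>j<K. p i j) = a i" and "\<forall>j<K. b j = 0 \<longrightarrow> p i j = 0"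
    and "0 \<le> x" and "x \<le> a i"
  shows "(\<Sum>j<K. p i j / (a i * b j) * x * b j) = x"
proof (cases "a i = 0")
  case False
  have "(\<Sum>j<K. p i j / (a i * b j) * x * b j) = (\<Sum>j<K. p i j) / a i * x"
    using assms(2) by (auto simp: sum_divide_distrib sum_distrib_right intro!: sum.cong)
  then show ?thesis using False assms(1) by simp
qed (use assms in simp)

lemma (in finite_measure) normalized_block_sum_eq_measure:
  fixes C :: "nat \<Rightarrow> 'a set" and p :: "nat \<Rightarrow> nat \<Rightarrow> real" and b :: "nat \<Rightarrow> real"
  assumes C: "\<forall>i<K. C i \<in> sets M" and disj: "disjoint_family_on C {..<K}"
    and cov: "space M \<subseteq> (\<Union>i<K. C i)"
    and rows: "\<forall>i<K. (\<Sum>j<K. p i j) = measure M (C i)"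
    and zero: "\<forall>i<K. \<forall>j<K. b j = 0 \<longrightarrow> p i j = 0"
    and A: "A \<in> sets M"
  shows "(\<Sum>i<K. \<Sum>j<K. p i j / (measure M (C i) * b j) * measure M (C i \<inter> A) * b j) = measure M A"
proof -
  have "(\<Sum>j<K. p i j / (measure M (C i) * b j) * measure M (C i \<inter> A) * b j) = measure M (C i \<inter> A)"
    if "i < K" for i
    using normalized_row_sum[of p i K "\<lambda>i. measure M (C i)" b "measure M (C i \<inter> A)"] rows zero that C A
    by (simp add: finite_measure_mono)
  then have "(\<Sum>i<K. \<Sum>j<K. p i j / (measure M (C i) * b j) * measure M (C i \<inter> A) * b j)
      = (\<Sum>i<K. measure M (C i \<inter> A))" by simp
  also have "\<dots> = measure M A"
    using C disj A sets.sets_into_space[OF A] cov by (intro measure_eq_sum_partition[symmetric]) auto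
  finally show ?thesis .
qed

lemma partition_coupling:
  fixes M1 M2 :: "'a::topological_space measure" and C :: "nat \<Rightarrow> 'a set" and p :: "nat \<Rightarrow> nat \<Rightarrow> real"
  assumes P1: "prob_space M1" and P2: "prob_space M2"
    and S1: "sets M1 = sets borel" and S2: "sets M2 = sets borel"
    and C: "\<forall>i<K. C i \<in> sets borel" and disj: "disjoint_family_on C {..<K}"
    and cov: "(\<Union>i<K. C i) = UNIV"
    and p0: "\<forall>i<K. \<forall>j<K. p i j \<ge> 0"
    and prow: "\<forall>i<K. (\<Sum>j<K. p i j) = measure M1 (C i)"
    and pcol: "\<forall>j<K. (\<Sum>i<K. p i j) = measure M2 (C j)"
    and pz: "\<forall>i<K. \<forall>j<K. measure M1 (C i) = 0 \<or> measure M2 (C j) = 0 \<longrightarrow> p i j = 0"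
  obtains \<pi> where "\<pi> \<in> couplings M1 M2" and "\<forall>i<K. \<forall>j<K. emeasure \<pi> (C i \<times> C j) = p i j"
proof -
  interpret p1: prob_space M1 by fact
  interpret p2: prob_space M2 by fact
  have sp1: "space M1 = UNIV" using sets_eq_imp_space_eq[OF S1] by simp
  have sp2: "space M2 = UNIV" using sets_eq_imp_space_eq[OF S2] by simp
  define a where "a i = measure M1 (C i)" for i
  define b where "b i = measure M2 (C i)" for i
  \<comment> \<open>The density \<open>p i j / (a i * b j)\<close> on \<open>C i \<times> C j\<close> gives that block the mass \<open>p i j\<close>.\<close>
  define G where "G i j = (if i < K \<and> j < K then p i j / (a i * b j) else 0)" for i j
  define \<pi> where "\<pi> = density (M1 \<Otimes>\<^sub>M M2) (\<lambda>z. \<Sum>i<K. \<Sum>j<K. ennreal (G i j) * indicator (C i \<times> C j) z)"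
  have G0: "\<forall>i j. G i j \<ge> 0" using p0 by (auto simp: G_def a_def b_def)
  have rect: "emeasure \<pi> (A \<times> B) = ennreal (\<Sum>i<K. \<Sum>j<K. G i j * measure M1 (C i \<inter> A) * measure M2 (C j \<inter> B))"
    if "A \<in> sets borel" "B \<in> sets borel" for A B
    unfolding \<pi>_def by (rule emeasure_cell_density_Times[OF P1 P2 S1 S2 C G0 that])
  have sets_\<pi>: "sets \<pi> = sets (M1 \<Otimes>\<^sub>M M2)" by (simp add: \<pi>_def)
  have "distr \<pi> M1 fst = M1"
  proof (rule distr_fst_eqI[OF sets_\<pi>])
    fix A assume A: "A \<in> sets M1"
    have "(\<Sum>i<K. \<Sum>j<K. G i j * measure M1 (C i \<inter> A) * measure M2 (C j \<inter> UNIV))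
        = (\<Sum>i<K. \<Sum>j<K. p i j / (measure M1 (C i) * b j) * measure M1 (C i \<inter> A) * b j)"
      by (simp add: G_def a_def b_def cong: sum.cong_simp)
    also have "\<dots> = measure M1 A"
      using A C S1 disj cov prow pz by (intro p1.normalized_block_sum_eq_measure) (auto simp: b_def)
    finally show "emeasure \<pi> (A \<times> space M2) = emeasure M1 A"
      using rect[of A UNIV] A S1 sp2 by (simp add: p1.emeasure_eq_measure)
  qed
  moreover have "distr \<pi> M2 snd = M2"
  proof (rule distr_snd_eqI[OF sets_\<pi>])
    fix B assume B: "B \<in> sets M2"
    have "(\<Sum>i<K. \<Sum>j<K. G i j * measure M1 (C i \<inter> UNIV) * measure M2 (C j \<inter> B))
        = (\<Sum>j<K. \<Sum>i<K. G i j * measure M1 (C i \<inter> UNIV) * measure M2 (C j \<inter> B))"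
      by (rule sum.swap)
    also have "\<dots> = (\<Sum>j<K. \<Sum>i<K. p i j / (measure M2 (C j) * a i) * measure M2 (C j \<inter> B) * a i)"
      by (auto simp: G_def a_def b_def mult_ac intro!: sum.cong)
    also have "\<dots> = measure M2 B"
      using B C S2 disj cov pcol pz by (intro p2.normalized_block_sum_eq_measure) (auto simp: a_def)
    finally show "emeasure \<pi> (space M1 \<times> B) = emeasure M2 B"
      using rect[of UNIV B] B S2 sp1 by (simp add: p2.emeasure_eq_measure)
  qed
  moreover have "emeasure \<pi> (C k \<times> C l) = p k l" if k: "k < K" and l: "l < K" for k l
  proof -
    have cell_meas: "measure M1 (C i \<inter> C k) = (if i = k then a k else 0)"
      "measure M2 (C j \<inter> C l) = (if j = l then b l else 0)" if "i < K" "j < K" for i j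
      using disj that k l by (auto simp: a_def b_def disjoint_family_on_def)
    have "(\<Sum>i<K. \<Sum>j<K. G i j * measure M1 (C i \<inter> C k) * measure M2 (C j \<inter> C l))
        = (\<Sum>i<K. \<Sum>j<K. if i = k \<and> j = l then G k l * a k * b l else 0)"
      using cell_meas by (intro sum.cong refl) auto
    also have "\<dots> = (\<Sum>i<K. if i = k then G k l * a k * b l else 0)"
      using l by (intro sum.cong refl) simp
    also have "\<dots> = G k l * a k * b l" using k by simp
    also have "\<dots> = p k l"
      using pz k l by (cases "a k = 0 \<or> b l = 0") (auto simp: G_def a_def b_def)
    finally show ?thesis using rect C k l by simp
  qed
  ultimately show ?thesis
    using that[of \<pi>] sets_\<pi> by (auto simp: couplings_def)
qed

lemma W2_sq_le_coupling:
  assumes "\<pi> \<in> couplings \<mu> \<nu>"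
    and "(\<integral>\<^sup>+ z. ennreal ((dist (fst z) (snd z))\<^sup>2) \<partial>\<pi>) \<le> ennreal c" and "0 \<le> c"
  shows "(W2 \<mu> \<nu>)\<^sup>2 \<le> c"
proof -
  have "(INF \<pi>\<in>couplings \<mu> \<nu>. \<integral>\<^sup>+ z. ennreal ((dist (fst z) (snd z))\<^sup>2) \<partial>\<pi>) \<le> ennreal c"
    using assms(1,2) by (rule INF_lower2)
  then have "enn2real (INF \<pi>\<in>couplings \<mu> \<nu>. \<integral>\<^sup>+ z. ennreal ((dist (fst z) (snd z))\<^sup>2) \<partial>\<pi>) \<le> c"
    using assms(3) enn2real_mono[of _ "ennreal c"] by fastforce
  then show ?thesis by (simp add: W2_def)
qed

lemma prob_space_coupling:
  assumes "\<pi> \<in> couplings \<mu> \<nu>" and "prob_space \<mu>"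
  shows "prob_space \<pi>"
proof (rule prob_space_distrD)
  have "sets \<pi> = sets (\<mu> \<Otimes>\<^sub>M \<nu>)" using assms(1) by (simp add: couplings_def)
  then show "fst \<in> measurable \<pi> \<mu>" using measurable_cong_sets measurable_fst by blast
  show "prob_space (distr \<pi> \<mu> fst)" using assms by (simp add: couplings_def)
qed

lemma dist_sq_le_off_diagonal_blocks:
  fixes C :: "nat \<Rightarrow> 'a::metric_space set"
  assumes cov: "(\<Union>i<K. C i) = UNIV"
    and diam: "\<forall>i<K. \<forall>x\<in>C i. \<forall>y\<in>C i. dist x y \<le> \<epsilon>"
    and D: "\<forall>x y::'a. dist x y \<le> D"
  shows "ennreal ((dist x y)\<^sup>2)
    \<le> ennreal (\<epsilon>\<^sup>2) + ennreal (D\<^sup>2) * (\<Sum>i<K. \<Sum>j\<in>{..<K}-{i}. indicator (C i \<times> C j) (x, y))"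
proof -
  obtain i j where i: "i < K" "x \<in> C i" and j: "j < K" "y \<in> C j" using cov by blast
  show ?thesis
  proof (cases "i = j")
    case True
    then have "(dist x y)\<^sup>2 \<le> \<epsilon>\<^sup>2" using diam i j by (simp add: power_mono)
    then show ?thesis by (simp add: add_increasing2 ennreal_leI)
  next
    case False
    have "(1::ennreal) = indicator (C i \<times> C j) (x, y)" using i j by simp
    also have "\<dots> \<le> (\<Sum>i<K. \<Sum>j\<in>{..<K}-{i}. indicator (C i \<times> C j) (x, y))"
      using i j False by (intro order_trans[OF _ member_le_sum[of i]] member_le_sum) auto
    finally have "1 \<le> (\<Sum>i<K. \<Sum>j\<in>{..<K}-{i}. indicator (C i \<times> C j) (x, y) :: ennreal)" .
    moreover have "(dist x y)\<^sup>2 \<le> D\<^sup>2" using D by (simp add: power_mono)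
    ultimately have "ennreal ((dist x y)\<^sup>2)
        \<le> ennreal (D\<^sup>2) * (\<Sum>i<K. \<Sum>j\<in>{..<K}-{i}. indicator (C i \<times> C j) (x, y))"
      using mult_mono[of "ennreal ((dist x y)\<^sup>2)" "ennreal (D\<^sup>2)" 1] by (simp add: ennreal_leI)
    then show ?thesis by (simp add: add_increasing)
  qed
qed

lemma nn_integral_dist_sq_le_blocks:
  fixes \<pi> :: "('a::metric_space \<times> 'a) measure" and C :: "nat \<Rightarrow> 'a set"
  assumes "prob_space \<pi>" and CC: "\<And>i j. i < K \<Longrightarrow> j < K \<Longrightarrow> C i \<times> C j \<in> sets \<pi>"
    and cov: "(\<Union>i<K. C i) = UNIV"
    and diam: "\<forall>i<K. \<forall>x\<in>C i. \<forall>y\<in>C i. dist x y \<le> \<epsilon>"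
    and D: "\<forall>x y::'a. dist x y \<le> D"
    and blocks: "\<forall>i<K. \<forall>j<K. emeasure \<pi> (C i \<times> C j) = p i j" and p0: "\<forall>i<K. \<forall>j<K. p i j \<ge> 0"
  shows "(\<integral>\<^sup>+ z. ennreal ((dist (fst z) (snd z))\<^sup>2) \<partial>\<pi>)
    \<le> ennreal (\<epsilon>\<^sup>2 + D\<^sup>2 * (\<Sum>i<K. \<Sum>j\<in>{..<K}-{i}. p i j))"
proof -
  define off where "off z = (\<Sum>i<K. \<Sum>j\<in>{..<K}-{i}. indicator (C i \<times> C j) z :: ennreal)" for z
  have off_meas: "off \<in> borel_measurable \<pi>"
    unfolding off_def using CC by (auto intro!: borel_measurable_sum)
  have "(\<integral>\<^sup>+ z. off z \<partial>\<pi>) = (\<Sum>i<K. \<integral>\<^sup>+ z. (\<Sum>j\<in>{..<K}-{i}. indicator (C i \<times> C j) z) \<partial>\<pi>)"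
    unfolding off_def using CC by (intro nn_integral_sum) (auto intro!: borel_measurable_sum)
  also have "\<dots> = (\<Sum>i<K. \<Sum>j\<in>{..<K}-{i}. emeasure \<pi> (C i \<times> C j))"
    using CC by (intro sum.cong refl) (subst nn_integral_sum, auto)
  also have "\<dots> = (\<Sum>i<K. ennreal (\<Sum>j\<in>{..<K}-{i}. p i j))"
    using blocks p0 by (intro sum.cong refl) (auto intro!: sum_ennreal)
  also have "\<dots> = ennreal (\<Sum>i<K. \<Sum>j\<in>{..<K}-{i}. p i j)"
    using p0 by (intro sum_ennreal) (auto intro!: sum_nonneg)
  finally have integral_off: "(\<integral>\<^sup>+ z. off z \<partial>\<pi>) = ennreal (\<Sum>i<K. \<Sum>j\<in>{..<K}-{i}. p i j)" .
  have "(\<integral>\<^sup>+ z. ennreal ((dist (fst z) (snd z))\<^sup>2) \<partial>\<pi>) \<le> (\<integral>\<^sup>+ z. ennreal (\<epsilon>\<^sup>2) + ennreal (D\<^sup>2) * off z \<partial>\<pi>)"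
    using dist_sq_le_off_diagonal_blocks[OF cov diam D] by (intro nn_integral_mono) (auto simp: off_def)
  also have "\<dots> = ennreal (\<epsilon>\<^sup>2) * emeasure \<pi> (space \<pi>) + ennreal (D\<^sup>2) * (\<integral>\<^sup>+ z. off z \<partial>\<pi>)"
    using off_meas by (simp add: nn_integral_add nn_integral_cmult)
  also have "\<dots> = ennreal (\<epsilon>\<^sup>2 + D\<^sup>2 * (\<Sum>i<K. \<Sum>j\<in>{..<K}-{i}. p i j))"
  proof -
    have "0 \<le> (\<Sum>i<K. \<Sum>j\<in>{..<K}-{i}. p i j)" using p0 by (auto intro!: sum_nonneg)
    then show ?thesis
      using integral_off prob_space.emeasure_space_1[OF \<open>prob_space \<pi>\<close>]
      by (simp add: ennreal_plus ennreal_mult)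
  qed
  finally show ?thesis .
qed

lemma W2_sq_le_partition:
  fixes M1 M2 :: "'a::metric_space measure" and C :: "nat \<Rightarrow> 'a set"
  assumes P1: "prob_space M1" and P2: "prob_space M2"
    and S1: "sets M1 = sets borel" and S2: "sets M2 = sets borel"
    and C: "\<forall>i<K. C i \<in> sets borel" and disj: "disjoint_family_on C {..<K}"
    and cov: "(\<Union>i<K. C i) = UNIV"
    and diam: "\<forall>i<K. \<forall>x\<in>C i. \<forall>y\<in>C i. dist x y \<le> \<epsilon>"
    and D: "\<forall>x y::'a. dist x y \<le> D"
  shows "(W2 M1 M2)\<^sup>2 \<le> \<epsilon>\<^sup>2 + D\<^sup>2 * (\<Sum>i<K. \<bar>measure M1 (C i) - measure M2 (C i)\<bar>)"
proof -
  interpret p1: prob_space M1 by fact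
  interpret p2: prob_space M2 by fact
  have "(\<Sum>i<K. measure M1 (C i)) = 1" "(\<Sum>i<K. measure M2 (C i)) = 1"
    using p1.measure_eq_sum_partition[of K C "space M1"] p1.prob_space
      p2.measure_eq_sum_partition[of K C "space M2"] p2.prob_space C S1 S2 disj cov
    by (simp_all add: sets_eq_imp_space_eq[OF S1] sets_eq_imp_space_eq[OF S2])
  then obtain p where p0: "\<forall>i<K. \<forall>j<K. p i j \<ge> 0"
    and prow: "\<forall>i<K. (\<Sum>j<K. p i j) = measure M1 (C i)"
    and pcol: "\<forall>j<K. (\<Sum>i<K. p i j) = measure M2 (C j)"
    and pz: "\<forall>i<K. \<forall>j<K. measure M1 (C i) = 0 \<or> measure M2 (C j) = 0 \<longrightarrow> p i j = 0"
    and poff: "(\<Sum>i<K. \<Sum>j\<in>{..<K}-{i}. p i j) \<le> (\<Sum>i<K. \<bar>measure M1 (C i) - measure M2 (C i)\<bar>)"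
    using maximal_coupling_finite[of K "\<lambda>i. measure M1 (C i)" "\<lambda>i. measure M2 (C i)"] by auto
  obtain \<pi> where coup: "\<pi> \<in> couplings M1 M2" and blocks: "\<forall>i<K. \<forall>j<K. emeasure \<pi> (C i \<times> C j) = p i j"
    using partition_coupling[OF P1 P2 S1 S2 C disj cov p0 prow pcol pz] by blast
  have "C i \<times> C j \<in> sets \<pi>" if "i < K" "j < K" for i j
    using coup C S1 S2 that by (auto simp: couplings_def intro!: pair_measureI)
  then have "(\<integral>\<^sup>+ z. ennreal ((dist (fst z) (snd z))\<^sup>2) \<partial>\<pi>)
      \<le> ennreal (\<epsilon>\<^sup>2 + D\<^sup>2 * (\<Sum>i<K. \<Sum>j\<in>{..<K}-{i}. p i j))"
    using prob_space_coupling[OF coup P1] cov diam D blocks p0 by (intro nn_integral_dist_sq_le_blocks)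
  also have "\<dots> \<le> ennreal (\<epsilon>\<^sup>2 + D\<^sup>2 * (\<Sum>i<K. \<bar>measure M1 (C i) - measure M2 (C i)\<bar>))"
    using poff by (intro ennreal_leI add_left_mono mult_left_mono) auto
  finally show ?thesis
    by (rule W2_sq_le_coupling[OF coup]) (simp add: sum_nonneg)
qed

lemma (in prob_space) joint_minus_product_le_alpha_mix:
  assumes "A \<in> sets borel" and "B \<in> sets borel"
  shows "\<bar>prob {\<omega>\<in>space M. X \<omega> \<in> A \<and> Y \<omega> \<in> B} - prob {\<omega>\<in>space M. X \<omega> \<in> A} * prob {\<omega>\<in>space M. Y \<omega> \<in> B}\<bar>
    \<le> alpha_mix M X Y"
  unfolding alpha_mix_def
proof (rule cSUP_upper2[where x="(A, B)"])
  have bound: "\<bar>p - q * r\<bar> \<le> 1" if "0 \<le> p" "p \<le> 1" "0 \<le> q" "q \<le> 1" "0 \<le> r" "r \<le> 1" for p q r :: real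
    using that mult_le_one[of q r] mult_nonneg_nonneg[of q r] by (intro abs_leI; linarith)
  show "bdd_above ((\<lambda>AB. \<bar>prob {\<omega> \<in> space M. X \<omega> \<in> fst AB \<and> Y \<omega> \<in> snd AB} -
      prob {\<omega> \<in> space M. X \<omega> \<in> fst AB} * prob {\<omega> \<in> space M. Y \<omega> \<in> snd AB}\<bar>) ` (sets borel \<times> sets borel))"
    by (rule bdd_aboveI2[where M=1]) (rule bound; simp)
qed (use assms in auto)

lemma (in prob_space) expectation_centered_indicators:
  assumes "E \<in> events" and "F \<in> events"
  shows "expectation (\<lambda>\<omega>. (indicator E \<omega> - prob E) * (indicator F \<omega> - prob F))
    = prob (E \<inter> F) - prob E * prob F"
proof -
  have "expectation (\<lambda>\<omega>. (indicator E \<omega> - prob E) * (indicator F \<omega> - prob F))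
      = expectation (\<lambda>\<omega>. indicator (E \<inter> F) \<omega> - prob F * indicator E \<omega> - prob E * indicator F \<omega> + prob E * prob F)"
    by (intro Bochner_Integration.integral_cong) (auto simp: indicator_def algebra_simps)
  also have "\<dots> = prob (E \<inter> F) - prob E * prob F"
  proof -
    have ind: "integrable M (indicator G :: 'a \<Rightarrow> real)" if "G \<in> events" for G
      using that by (simp add: emeasure_eq_measure)
    show ?thesis
      using ind[of E] ind[of F] ind[of "E \<inter> F"] assms
      by (simp add: Bochner_Integration.integral_diff Bochner_Integration.integral_add prob_space)
  qed
  finally show ?thesis .
qed

lemma (in prob_space) expectation_square_sum_le:
  fixes Y :: "nat \<Rightarrow> 'a \<Rightarrow> real"
  assumes Y_meas: "\<And>n. n \<ge> 1 \<Longrightarrow> Y n \<in> borel_measurable M"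
    and Y_bound: "\<And>n \<omega>. n \<ge> 1 \<Longrightarrow> \<bar>Y n \<omega>\<bar> \<le> 1"
    and E_YY: "\<And>m n. 1 \<le> m \<Longrightarrow> m < n \<Longrightarrow> expectation (\<lambda>\<omega>. Y m \<omega> * Y n \<omega>) \<le> c m n"
  shows "integrable M (\<lambda>\<omega>. (\<Sum>n\<in>{1..N}. Y n \<omega>)\<^sup>2)"
    and "expectation (\<lambda>\<omega>. (\<Sum>n\<in>{1..N}. Y n \<omega>)\<^sup>2) \<le> real N + 2 * (\<Sum>n\<in>{1..N}. \<Sum>m\<in>{1..<n}. c m n)"
proof -
  define S where "S N \<omega> = (\<Sum>n\<in>{1..N}. Y n \<omega>)" for N \<omega>
  have S_meas: "S N \<in> borel_measurable M" for N unfolding S_def using Y_meas by auto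
  have S_bound: "\<bar>S N \<omega>\<bar> \<le> real N" for N \<omega>
  proof -
    have "\<bar>S N \<omega>\<bar> \<le> (\<Sum>n\<in>{1..N}. \<bar>Y n \<omega>\<bar>)" unfolding S_def by (rule sum_abs)
    also have "\<dots> \<le> (\<Sum>n\<in>{1..N}. 1)" using Y_bound by (intro sum_mono) auto
    finally show ?thesis by simp
  qed
  have bounded_integrable: "integrable M f" if "f \<in> borel_measurable M" "\<And>\<omega>. \<bar>f \<omega>\<bar> \<le> B" for f :: "'a \<Rightarrow> real" and B
    using that by (intro integrable_const_bound[where B=B]) auto
  have int_S2: "integrable M (\<lambda>\<omega>. (S N \<omega>)\<^sup>2)" for N
    using S_meas S_bound abs_le_square_iff[of "S N _" "real N"] by (intro bounded_integrable[of _ "(real N)\<^sup>2"]) auto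
  have int_SY: "integrable M (\<lambda>\<omega>. S N \<omega> * Y n \<omega>)" if "n \<ge> 1" for N n
    using S_meas Y_meas[OF that] S_bound Y_bound[OF that]
    by (intro bounded_integrable[of _ "real N"]) (auto simp: abs_mult intro: mult_mono[of _ "real N" _ 1, simplified])
  have int_YY: "integrable M (\<lambda>\<omega>. Y m \<omega> * Y n \<omega>)" if "m \<ge> 1" "n \<ge> 1" for m n
    using Y_meas that Y_bound
    by (intro bounded_integrable[of _ 1]) (auto simp: abs_mult intro: mult_le_one)
  have E_Y2: "expectation (\<lambda>\<omega>. (Y n \<omega>)\<^sup>2) \<le> 1" if "n \<ge> 1" for n
  proof -
    have "expectation (\<lambda>\<omega>. (Y n \<omega>)\<^sup>2) \<le> expectation (\<lambda>\<omega>. 1)"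
      using int_YY[OF that that] Y_bound[OF that] abs_le_square_iff[of "Y n _" 1]
      by (intro integral_mono) (auto simp: power2_eq_square)
    then show ?thesis by (simp add: prob_space)
  qed
  show "integrable M (\<lambda>\<omega>. (\<Sum>n\<in>{1..N}. Y n \<omega>)\<^sup>2)"
    using int_S2 by (simp add: S_def)
  show "expectation (\<lambda>\<omega>. (\<Sum>n\<in>{1..N}. Y n \<omega>)\<^sup>2) \<le> real N + 2 * (\<Sum>n\<in>{1..N}. \<Sum>m\<in>{1..<n}. c m n)"
    unfolding S_def[symmetric]
  proof (induction N)
    case (Suc N)
    have "expectation (\<lambda>\<omega>. (S (Suc N) \<omega>)\<^sup>2)
        = expectation (\<lambda>\<omega>. (S N \<omega>)\<^sup>2 + 2 * (S N \<omega> * Y (Suc N) \<omega>) + (Y (Suc N) \<omega>)\<^sup>2)"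
      by (intro Bochner_Integration.integral_cong) (simp_all add: S_def power2_eq_square algebra_simps)
    also have "\<dots> = expectation (\<lambda>\<omega>. (S N \<omega>)\<^sup>2) + 2 * expectation (\<lambda>\<omega>. S N \<omega> * Y (Suc N) \<omega>)
        + expectation (\<lambda>\<omega>. (Y (Suc N) \<omega>)\<^sup>2)"
      using int_S2 int_SY int_YY[of "Suc N" "Suc N"] by (simp add: power2_eq_square)
    also have "expectation (\<lambda>\<omega>. S N \<omega> * Y (Suc N) \<omega>) = (\<Sum>m\<in>{1..N}. expectation (\<lambda>\<omega>. Y m \<omega> * Y (Suc N) \<omega>))"
      unfolding S_def sum_distrib_right using int_YY by (simp add: integral_sum)
    also have "\<dots> \<le> (\<Sum>m\<in>{1..N}. c m (Suc N))"
      using E_YY by (intro sum_mono) auto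
    finally have "expectation (\<lambda>\<omega>. (S (Suc N) \<omega>)\<^sup>2)
        \<le> expectation (\<lambda>\<omega>. (S N \<omega>)\<^sup>2) + 2 * (\<Sum>m\<in>{1..N}. c m (Suc N)) + 1"
      using E_Y2[of "Suc N"] by linarith
    moreover have "{1..<Suc N} = {1..N}" by auto
    ultimately show ?case using Suc.IH by (simp add: algebra_simps)
  qed (simp add: S_def)
qed

lemma (in prob_space) second_moment_centered_count_le:
  fixes X :: "nat \<Rightarrow> 'a \<Rightarrow> 'b::topological_space" and \<mu> :: "'b measure"
  assumes Xm: "\<And>n. n \<ge> 1 \<Longrightarrow> X n \<in> measurable M borel"
    and Xd: "\<And>n. n \<ge> 1 \<Longrightarrow> distr M borel (X n) = \<mu>"
    and A: "A \<in> sets borel"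
  shows "integrable M (\<lambda>\<omega>. (\<Sum>n\<in>{1..N}. indicator A (X n \<omega>) - measure \<mu> A)\<^sup>2)"
    and "expectation (\<lambda>\<omega>. (\<Sum>n\<in>{1..N}. indicator A (X n \<omega>) - measure \<mu> A)\<^sup>2)
           \<le> real N + 2 * (\<Sum>n\<in>{1..N}. \<Sum>m\<in>{1..<n}. alpha_mix M (X m) (X n))"
proof -
  define E where "E n = {\<omega>\<in>space M. X n \<omega> \<in> A}" for n
  have E: "E n \<in> events" if "n \<ge> 1" for n unfolding E_def using Xm[OF that] A by measurable
  have prob_E: "prob (E n) = measure \<mu> A" if "n \<ge> 1" for n
    using Xm[OF that] A by (simp add: Xd[OF that, symmetric] measure_distr E_def vimage_def Int_def conj_commute)
  have centered: "indicator A (X n \<omega>) - measure \<mu> A = indicator (E n) \<omega> - prob (E n)"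
    if "n \<ge> 1" "\<omega> \<in> space M" for n \<omega>
    using that prob_E[OF that(1)] by (auto simp: E_def indicator_def)
  have cov_le: "expectation (\<lambda>\<omega>. (indicator A (X m \<omega>) - measure \<mu> A) * (indicator A (X n \<omega>) - measure \<mu> A))
      \<le> alpha_mix M (X m) (X n)" if "m \<ge> 1" "m < n" for m n
  proof -
    have "expectation (\<lambda>\<omega>. (indicator A (X m \<omega>) - measure \<mu> A) * (indicator A (X n \<omega>) - measure \<mu> A))
        = expectation (\<lambda>\<omega>. (indicator (E m) \<omega> - prob (E m)) * (indicator (E n) \<omega> - prob (E n)))"
      using that by (intro Bochner_Integration.integral_cong) (auto simp: centered)
    also have "\<dots> = prob (E m \<inter> E n) - prob (E m) * prob (E n)"
      using E[of m] E[of n] that by (intro expectation_centered_indicators) auto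
    also have "\<dots> \<le> alpha_mix M (X m) (X n)"
    proof -
      have "E m \<inter> E n = {\<omega>\<in>space M. X m \<omega> \<in> A \<and> X n \<omega> \<in> A}" by (auto simp: E_def)
      then show ?thesis
        using joint_minus_product_le_alpha_mix[OF A A, of "X m" "X n"] by (simp add: E_def)
    qed
    finally show ?thesis .
  qed
  have meas: "(\<lambda>\<omega>. indicator A (X n \<omega>) - measure \<mu> A) \<in> borel_measurable M" if "n \<ge> 1" for n
    using Xm[OF that] A by measurable
  have bound: "\<bar>indicator A (X n \<omega>) - measure \<mu> A\<bar> \<le> 1" if "n \<ge> 1" for n \<omega>
    using measure_nonneg[of \<mu> A] prob_E[OF that] prob_le_1[of "E n"] by (auto simp: indicator_def)
  show "integrable M (\<lambda>\<omega>. (\<Sum>n\<in>{1..N}. indicator A (X n \<omega>) - measure \<mu> A)\<^sup>2)"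
    and "expectation (\<lambda>\<omega>. (\<Sum>n\<in>{1..N}. indicator A (X n \<omega>) - measure \<mu> A)\<^sup>2)
           \<le> real N + 2 * (\<Sum>n\<in>{1..N}. \<Sum>m\<in>{1..<n}. alpha_mix M (X m) (X n))"
    using expectation_square_sum_le[where Y="\<lambda>n \<omega>. indicator A (X n \<omega>) - measure \<mu> A"
        and c="\<lambda>m n. alpha_mix M (X m) (X n)" and N=N, OF meas bound cov_le] by simp_all
qed

lemma compact_partition_small_diameter:
  fixes \<epsilon> :: real
  assumes cpt: "compact (UNIV :: 'a set)" and e: "\<epsilon> > 0"
  obtains K and C :: "nat \<Rightarrow> 'a::metric_space set" where "\<forall>i<K. C i \<in> sets borel"
    and "disjoint_family_on C {..<K}" and "(\<Union>i<K. C i) = UNIV"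
    and "\<forall>i<K. \<forall>x\<in>C i. \<forall>y\<in>C i. dist x y \<le> \<epsilon>"
proof -
  obtain T :: "'a set" where T: "finite T" "UNIV \<subseteq> (\<Union>c\<in>T. ball c (\<epsilon>/2))"
  proof (rule compactE_image[OF cpt, of UNIV "\<lambda>c. ball c (\<epsilon>/2)"])
    show "UNIV \<subseteq> (\<Union>c\<in>UNIV. ball c (\<epsilon>/2))" using e by auto
  qed auto
  obtain xs where xs: "set xs = T" using finite_list[OF T(1)] by blast
  define B where "B i = (if i < length xs then ball (xs ! i) (\<epsilon>/2) else {})" for i
  define C where "C = disjointed B"
  have "range B \<subseteq> sets borel" by (auto simp: B_def)
  then have "range C \<subseteq> sets borel" unfolding C_def by (rule sets.range_disjointed_sets)
  moreover have "disjoint_family_on C {..<length xs}"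
    unfolding C_def by (rule disjoint_family_on_mono[OF subset_UNIV disjoint_family_disjointed])
  moreover have "(\<Union>i<length xs. C i) = UNIV"
  proof -
    have "x \<in> (\<Union>i<length xs. B i)" for x
    proof -
      obtain c where "c \<in> T" "x \<in> ball c (\<epsilon>/2)" using T(2) by blast
      moreover obtain i where "i < length xs" "xs ! i = c" using xs calculation(1) in_set_conv_nth by metis
      ultimately show ?thesis by (auto simp: B_def)
    qed
    then show ?thesis unfolding C_def by (auto simp: lessThan_atLeast0 finite_UN_disjointed_eq)
  qed
  moreover have "dist x y \<le> \<epsilon>" if "i < length xs" "x \<in> C i" "y \<in> C i" for i x y
  proof -
    have "dist (xs ! i) x < \<epsilon>/2" "dist (xs ! i) y < \<epsilon>/2"
      using that disjointed_subset[of B i] by (auto simp: C_def B_def)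
    then show ?thesis using dist_triangle[of x y "xs ! i"] by (simp add: dist_commute)
  qed
  ultimately show ?thesis using that[of "length xs" C] by blast
qed

lemma
  fixes x :: "nat \<Rightarrow> 'a::topological_space"
  shows prob_space_empirical: "N \<ge> 1 \<Longrightarrow> prob_space (empirical N x)"
    and sets_empirical: "sets (empirical N x) = sets borel"
    and measure_empirical: "B \<in> sets borel \<Longrightarrow>
      measure (empirical N x) B = (\<Sum>n\<in>{1..N}. indicator B (x n)) / real N"
proof -
  have x_meas: "x \<in> measurable (uniform_count_measure {1..N}) borel"
    by (simp add: measurable_cong_sets[OF sets_uniform_count_measure_count_space refl])
  show "N \<ge> 1 \<Longrightarrow> prob_space (empirical N x)"
    unfolding empirical_def using x_meas
    by (intro prob_space.prob_space_distr prob_space_uniform_count_measure) auto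
  show "sets (empirical N x) = sets borel" by (simp add: empirical_def)
  assume B: "B \<in> sets borel"
  have "(\<Sum>n\<in>{1..N}. indicator B (x n) :: real) = real (card ({1..N} \<inter> x -` B))"
    by (simp add: indicator_def sum.If_cases Int_def)
  then show "measure (empirical N x) B = (\<Sum>n\<in>{1..N}. indicator B (x n)) / real N"
    unfolding empirical_def using x_meas B
    by (simp add: measure_distr space_uniform_count_measure measure_uniform_count_measure Int_commute)
qed

lemma abs_le_sq_div_add:
  fixes z \<delta> :: real
  assumes "\<delta> > 0"
  shows "\<bar>z\<bar> \<le> z\<^sup>2 / \<delta> + \<delta>"
proof (cases "\<bar>z\<bar> \<le> \<delta>")
  case False
  then have "\<bar>z\<bar> * \<delta> \<le> \<bar>z\<bar> * \<bar>z\<bar>" using assms by (intro mult_left_mono) auto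
  then have "\<bar>z\<bar> \<le> z\<^sup>2 / \<delta>" using assms by (simp add: field_simps power2_eq_square abs_mult_self_eq)
  then show ?thesis using assms by simp
next
  case True
  moreover have "0 \<le> z\<^sup>2 / \<delta>" using assms by simp
  ultimately show ?thesis by linarith
qed

lemma W2_empirical_sq_le:
  fixes x :: "nat \<Rightarrow> 'a::metric_space" and \<mu> :: "'a measure" and C :: "nat \<Rightarrow> 'a set"
  assumes "prob_space \<mu>" and "sets \<mu> = sets borel"
    and C: "\<forall>i<K. C i \<in> sets borel" and "disjoint_family_on C {..<K}"
    and "(\<Union>i<K. C i) = UNIV"
    and "\<forall>i<K. \<forall>x\<in>C i. \<forall>y\<in>C i. dist x y \<le> \<epsilon>"
    and "\<forall>x y::'a. dist x y \<le> D" and "\<delta> > 0" and "N \<ge> 1"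
  shows "(W2 (empirical N x) \<mu>)\<^sup>2
    \<le> \<epsilon>\<^sup>2 + D\<^sup>2 * (\<Sum>i<K. (\<Sum>n\<in>{1..N}. indicator (C i) (x n) - measure \<mu> (C i))\<^sup>2 / (real N)\<^sup>2 / \<delta> + \<delta>)"
proof -
  have "(W2 (empirical N x) \<mu>)\<^sup>2 \<le> \<epsilon>\<^sup>2 + D\<^sup>2 * (\<Sum>i<K. \<bar>measure (empirical N x) (C i) - measure \<mu> (C i)\<bar>)"
    using prob_space_empirical[OF \<open>N \<ge> 1\<close>] sets_empirical assms(1-7) by (intro W2_sq_le_partition)
  also have "\<dots> \<le> \<epsilon>\<^sup>2 + D\<^sup>2 * (\<Sum>i<K. (\<Sum>n\<in>{1..N}. indicator (C i) (x n) - measure \<mu> (C i))\<^sup>2 / (real N)\<^sup>2 / \<delta> + \<delta>)"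
  proof (intro add_left_mono mult_left_mono sum_mono)
    fix i assume "i \<in> {..<K}"
    then have "measure (empirical N x) (C i) - measure \<mu> (C i)
        = (\<Sum>n\<in>{1..N}. indicator (C i) (x n) - measure \<mu> (C i)) / real N"
      using measure_empirical[where B="C i" and N=N] C \<open>N \<ge> 1\<close> by (simp add: sum_subtractf field_simps)
    then show "\<bar>measure (empirical N x) (C i) - measure \<mu> (C i)\<bar>
        \<le> (\<Sum>n\<in>{1..N}. indicator (C i) (x n) - measure \<mu> (C i))\<^sup>2 / (real N)\<^sup>2 / \<delta> + \<delta>"
      using abs_le_sq_div_add[OF \<open>\<delta> > 0\<close>,
          of "(\<Sum>n\<in>{1..N}. indicator (C i) (x n) - measure \<mu> (C i)) / real N"]
      by (simp add: power_divide)
  qed simp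
  finally show ?thesis .
qed

lemma expected_W2_sq_le:
  fixes P :: "'s measure" and X :: "nat \<Rightarrow> 's \<Rightarrow> 'a::metric_space" and \<mu> :: "'a measure"
    and C :: "nat \<Rightarrow> 'a set"
  assumes "prob_space P"
    and Xm: "\<And>n. n \<ge> 1 \<Longrightarrow> X n \<in> measurable P borel"
    and Xd: "\<And>n. n \<ge> 1 \<Longrightarrow> distr P borel (X n) = \<mu>"
    and C: "\<forall>i<K. C i \<in> sets borel" and disj: "disjoint_family_on C {..<K}"
    and cov: "(\<Union>i<K. C i) = UNIV"
    and diam: "\<forall>i<K. \<forall>x\<in>C i. \<forall>y\<in>C i. dist x y \<le> \<epsilon>"
    and D: "\<forall>x y::'a. dist x y \<le> D" and "\<delta> > 0" and "N \<ge> 1"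
  shows "(\<integral>\<^sup>+ \<omega>. ennreal ((W2 (empirical N (\<lambda>n. X n \<omega>)) \<mu>)\<^sup>2) \<partial>P)
     \<le> ennreal (\<epsilon>\<^sup>2 + D\<^sup>2 * real K *
          (\<delta> + (real N + 2 * (\<Sum>n\<in>{1..N}. \<Sum>m\<in>{1..<n}. alpha_mix P (X m) (X n))) / (real N)\<^sup>2 / \<delta>))"
proof -
  interpret P: prob_space P by fact
  define T where "T = (\<Sum>n\<in>{1..N}. \<Sum>m\<in>{1..<n}. alpha_mix P (X m) (X n))"
  define S where "S i \<omega> = (\<Sum>n\<in>{1..N}. indicator (C i) (X n \<omega>) - measure \<mu> (C i))" for i \<omega>
  define F where "F \<omega> = \<epsilon>\<^sup>2 + D\<^sup>2 * (\<Sum>i<K. (S i \<omega>)\<^sup>2 / (real N)\<^sup>2 / \<delta> + \<delta>)" for \<omega>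
  have prob_\<mu>: "prob_space \<mu>" using P.prob_space_distr[OF Xm] Xd by fastforce
  have sets_\<mu>: "sets \<mu> = sets borel" using Xd[of 1] by (metis order_refl sets_distr)
  have S_moment: "integrable P (\<lambda>\<omega>. (S i \<omega>)\<^sup>2)" "P.expectation (\<lambda>\<omega>. (S i \<omega>)\<^sup>2) \<le> real N + 2 * T"
    if "i < K" for i
    using P.second_moment_centered_count_le[OF Xm Xd, where A="C i" and N=N] C that unfolding S_def T_def by auto
  have pointwise: "(W2 (empirical N (\<lambda>n. X n \<omega>)) \<mu>)\<^sup>2 \<le> F \<omega>" for \<omega>
    unfolding F_def S_def
    using prob_\<mu> sets_\<mu> C disj cov diam D \<open>\<delta> > 0\<close> \<open>N \<ge> 1\<close> by (rule W2_empirical_sq_le)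
  have int_F: "integrable P F"
    unfolding F_def using S_moment
    by (intro Bochner_Integration.integrable_add integrable_mult_right Bochner_Integration.integrable_sum
        integrable_divide) auto
  have "P.expectation F = \<epsilon>\<^sup>2 + D\<^sup>2 * (\<Sum>i<K. P.expectation (\<lambda>\<omega>. (S i \<omega>)\<^sup>2) / (real N)\<^sup>2 / \<delta> + \<delta>)"
  proof -
    have int_terms: "integrable P (\<lambda>\<omega>. (S i \<omega>)\<^sup>2 / (real N)\<^sup>2 / \<delta> + \<delta>)" if "i < K" for i
      using S_moment(1)[OF that] by simp
    have "P.expectation F = \<epsilon>\<^sup>2 + D\<^sup>2 * P.expectation (\<lambda>\<omega>. \<Sum>i<K. (S i \<omega>)\<^sup>2 / (real N)\<^sup>2 / \<delta> + \<delta>)"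
      unfolding F_def using int_terms
      by (subst Bochner_Integration.integral_add) (auto simp: P.prob_space)
    also have "P.expectation (\<lambda>\<omega>. \<Sum>i<K. (S i \<omega>)\<^sup>2 / (real N)\<^sup>2 / \<delta> + \<delta>)
        = (\<Sum>i<K. P.expectation (\<lambda>\<omega>. (S i \<omega>)\<^sup>2 / (real N)\<^sup>2 / \<delta> + \<delta>))"
      using int_terms by (intro Bochner_Integration.integral_sum) auto
    also have "\<dots> = (\<Sum>i<K. P.expectation (\<lambda>\<omega>. (S i \<omega>)\<^sup>2) / (real N)\<^sup>2 / \<delta> + \<delta>)"
      using S_moment(1) by (intro sum.cong refl) (simp add: P.prob_space)
    finally show ?thesis .
  qed
  also have "\<dots> \<le> \<epsilon>\<^sup>2 + D\<^sup>2 * (\<Sum>i<K. (real N + 2 * T) / (real N)\<^sup>2 / \<delta> + \<delta>)"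
    using S_moment \<open>\<delta> > 0\<close> by (intro add_left_mono mult_left_mono sum_mono add_right_mono divide_right_mono) auto
  finally have E_F: "P.expectation F \<le> \<epsilon>\<^sup>2 + D\<^sup>2 * real K * (\<delta> + (real N + 2 * T) / (real N)\<^sup>2 / \<delta>)"
    by (simp add: algebra_simps)
  have "(\<integral>\<^sup>+ \<omega>. ennreal ((W2 (empirical N (\<lambda>n. X n \<omega>)) \<mu>)\<^sup>2) \<partial>P) \<le> (\<integral>\<^sup>+ \<omega>. ennreal (F \<omega>) \<partial>P)"
    using pointwise by (intro nn_integral_mono ennreal_leI)
  also have "\<dots> = ennreal (P.expectation F)"
    using int_F pointwise by (intro nn_integral_eq_integral) (auto intro: order_trans[OF zero_le_power2])
  also have "\<dots> \<le> ennreal (\<epsilon>\<^sup>2 + D\<^sup>2 * real K * (\<delta> + (real N + 2 * T) / (real N)\<^sup>2 / \<delta>))"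
    using E_F by (rule ennreal_leI)
  finally show ?thesis unfolding T_def .
qed

lemma ennreal_tendsto_zeroI:
  fixes f :: "nat \<Rightarrow> ennreal"
  assumes "\<And>a. a > 0 \<Longrightarrow> eventually (\<lambda>n. f n \<le> ennreal a) sequentially"
  shows "f \<longlonglongrightarrow> 0"
proof (rule order_tendstoI)
  fix e :: ennreal assume "0 < e"
  then obtain b where "0 < b" "b < e" using dense by blast
  then obtain a where "a > 0" "ennreal a < e" by (cases b rule: ennreal_cases) auto
  show "eventually (\<lambda>n. f n < e) sequentially"
    using assms[OF \<open>a > 0\<close>] by eventually_elim (use \<open>ennreal a < e\<close> in auto)
qed simp

lemma eventually_le_by_tradeoff:
  fixes V :: "nat \<Rightarrow> real"
  assumes "V \<longlonglongrightarrow> 0" and "c \<ge> 0" and "a > 0"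
  obtains \<delta> where "\<delta> > 0" and "eventually (\<lambda>N. c * (\<delta> + V N / \<delta>) \<le> a) sequentially"
proof -
  define \<delta> where "\<delta> = a / (2 * (c + 1))"
  have "\<delta> > 0" using assms by (simp add: \<delta>_def)
  have "eventually (\<lambda>N. V N < \<delta>\<^sup>2) sequentially"
    using assms(1) \<open>\<delta> > 0\<close> by (intro order_tendstoD(2)) auto
  then have "eventually (\<lambda>N. c * (\<delta> + V N / \<delta>) \<le> a) sequentially"
  proof eventually_elim
    case (elim N)
    then have "V N / \<delta> \<le> \<delta>" using \<open>\<delta> > 0\<close> by (simp add: divide_le_eq power2_eq_square)
    then have "c * (\<delta> + V N / \<delta>) \<le> c * (2 * \<delta>)" using assms(2) by (intro mult_left_mono) auto
    also have "\<dots> = a * (c / (c + 1))" using assms(2) by (simp add: \<delta>_def field_simps)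
    also have "\<dots> \<le> a" using assms by (intro mult_left_le) auto
    finally show ?case .
  qed
  then show ?thesis using that \<open>\<delta> > 0\<close> by blast
qed

lemma tendsto_count_plus_sum_div_sq:
  fixes T :: "nat \<Rightarrow> real"
  assumes "(\<lambda>N. T N / (real N)\<^sup>2) \<longlonglongrightarrow> 0"
  shows "(\<lambda>N. (real N + 2 * T N) / (real N)\<^sup>2) \<longlonglongrightarrow> 0"
proof -
  have "(\<lambda>N. (real N + 2 * T N) / (real N)\<^sup>2) = (\<lambda>N. inverse (real N) + 2 * (T N / (real N)\<^sup>2))"
    by (auto simp: add_divide_distrib power2_eq_square inverse_eq_divide)
  then show ?thesis
    using tendsto_add_zero[OF lim_inverse_n tendsto_mult_right_zero[OF assms]] by simp
qed

theorem theorem1: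
  fixes P :: "'s measure" and X :: "nat \<Rightarrow> 's \<Rightarrow> 'a::metric_space" and \<mu> :: "'a measure"
  assumes "prob_space P"
    and "compact (UNIV :: 'a set)" and "connected (UNIV :: 'a set)"
    and "\<And>n. n \<ge> 1 \<Longrightarrow> X n \<in> measurable P borel"
    and "\<And>n. n \<ge> 1 \<Longrightarrow> distr P borel (X n) = \<mu>"
    and "(\<lambda>N. (\<Sum>n\<in>{1..N}. \<Sum>m\<in>{1..<n}. alpha_mix P (X m) (X n)) / (real N)\<^sup>2)
           \<longlonglongrightarrow> 0"
  shows "(\<lambda>N. \<integral>\<^sup>+ \<omega>. ennreal ((W2 (empirical N (\<lambda>n. X n \<omega>)) \<mu>)\<^sup>2) \<partial>P) \<longlonglongrightarrow> 0"
proof (rule ennreal_tendsto_zeroI)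
  fix a :: real assume "a > 0"
  obtain D where D: "\<forall>x y::'a. dist x y \<le> D"
    using compact_imp_bounded[OF assms(2)] unfolding bounded_two_points by blast
  define V where "V N = (real N + 2 * (\<Sum>n\<in>{1..N}. \<Sum>m\<in>{1..<n}. alpha_mix P (X m) (X n))) / (real N)\<^sup>2" for N
  have "V \<longlonglongrightarrow> 0" unfolding V_def by (rule tendsto_count_plus_sum_div_sq[OF assms(6)])
  obtain K and C :: "nat \<Rightarrow> 'a set" where partition: "\<forall>i<K. C i \<in> sets borel"
    "disjoint_family_on C {..<K}" "(\<Union>i<K. C i) = UNIV" "\<forall>i<K. \<forall>x\<in>C i. \<forall>y\<in>C i. dist x y \<le> sqrt (a / 2)"
    using compact_partition_small_diameter[OF assms(2), of "sqrt (a / 2)"] \<open>a > 0\<close> by auto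
  obtain \<delta> where "\<delta> > 0" and tradeoff: "eventually (\<lambda>N. D\<^sup>2 * real K * (\<delta> + V N / \<delta>) \<le> a / 2) sequentially"
    using eventually_le_by_tradeoff[OF \<open>V \<longlonglongrightarrow> 0\<close>, of "D\<^sup>2 * real K" "a / 2"] \<open>a > 0\<close> by auto
  show "eventually (\<lambda>N. (\<integral>\<^sup>+ \<omega>. ennreal ((W2 (empirical N (\<lambda>n. X n \<omega>)) \<mu>)\<^sup>2) \<partial>P) \<le> ennreal a) sequentially"
    using tradeoff eventually_ge_at_top[of 1]
  proof eventually_elim
    case (elim N)
    have "(\<integral>\<^sup>+ \<omega>. ennreal ((W2 (empirical N (\<lambda>n. X n \<omega>)) \<mu>)\<^sup>2) \<partial>P)
        \<le> ennreal ((sqrt (a / 2))\<^sup>2 + D\<^sup>2 * real K * (\<delta> + V N / \<delta>))"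
      using expected_W2_sq_le[OF assms(1,4,5) partition D \<open>\<delta> > 0\<close> elim(2)] \<open>a > 0\<close>
      by (simp add: V_def)
    also have "\<dots> \<le> ennreal a"
      using elim(1) \<open>a > 0\<close> by (intro ennreal_leI) (simp add: field_simps)
    finally show ?case .
  qed
qed

end
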